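(* Let $p,q$ be coprime integers with $|p|\ge 2$ and $|q|\ge 2$, let $T=T(p,q)$, write $c=c(T)$, and set $\rho=\rho(T)=\left|\frac{6v_3(T)}{v_2(T)}\right|$. Then $$24\,v_2(T)\,(c-\rho)^2=c\left((c-\rho)^2-1\right)(2\rho-c),$$ and $$c=\rho-\tfrac{1}{2}\left(\sqrt{(\rho-1)^2-24v_2(T)}+\sqrt{(\rho+1)^2-24v_2(T)}\right).$$
   Context: $v_2$ and $v_3$ are the first two Vassiliev knot invariants, normalized as follows. The space of additive Vassiliev invariants of type three splits into invariants unchanged under taking mirror images and invariants that change sign under mirror image; $v_2$ (resp.\ $v_3$) is the element of the first (resp.\ second) one-dimensional summand taking the value $1$ on the positive trefoil. For coprime integers $p,q$ with $|p|,|q|\ge 2$, $T(p,q)$ denotes the (nontrivial) $(p,q)$-torus knot, and its invariants are known to be $$v_2(T(p,q))=\tfrac{1}{24}(p^2-1)(q^2-1),\qquad v_3(T(p,q))=\tfrac{1}{144}\,pq\,(p^2-1)(q^2-1).$$ $c(T)$ denotes the crossing number; for torus knots it is known that $c(T(p,q))=|q|(|p|-1)$ when $|p|<|q|$ (and symmetrically $c(T(p,q))=|p|(|q|-1)$ when $|q|<|p|$). *)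

theory Defs
  imports Complex_Main
begin

text \<open>The torus knot T(p,q) is
represented by its parameters (p,q), and the invariants v2, v3 and the crossing
number c are given by the values stated as known in the context.\<close>

definition v2_torus :: "int \<Rightarrow> int \<Rightarrow> real" where
  "v2_torus p q = (real_of_int p ^ 2 - 1) * (real_of_int q ^ 2 - 1) / 24"

definition v3_torus :: "int \<Rightarrow> int \<Rightarrow> real" where
  "v3_torus p q = real_of_int p * real_of_int q * (real_of_int p ^ 2 - 1) * (real_of_int q ^ 2 - 1) / 144"

definition crossing_torus :: "int \<Rightarrow> int \<Rightarrow> real" where
  "crossing_torus p q =
     (if \<bar>p\<bar> < \<bar>q\<bar> then real_of_int (\<bar>q\<bar> * (\<bar>p\<bar> - 1))
      else real_of_int (\<bar>p\<bar> * (\<bar>q\<bar> - 1)))"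

definition rho_torus :: "int \<Rightarrow> int \<Rightarrow> real" where
  "rho_torus p q = \<bar>6 * v3_torus p q / v2_torus p q\<bar>"

end

theory Submission
  imports Defs
begin

text \<open>With m = min |p| |q| and n = max |p| |q| one has 24 v2 = (m^2 - 1)(n^2 - 1),
  \<rho> = mn and c = n(m - 1), so c - \<rho> = -n. Both radicands are perfect squares,
  (\<rho> \<mp> 1)^2 - 24 v2 = (n \<mp> m)^2, and both claims become polynomial identities
  in m and n.\<close>

lemma v2_torus_abs:
  "v2_torus p q = (real_of_int \<bar>p\<bar> ^ 2 - 1) * (real_of_int \<bar>q\<bar> ^ 2 - 1) / 24"
  by (simp add: v2_torus_def)

lemma rho_torus_eq_abs_mult:
  assumes "\<bar>p\<bar> \<noteq> 1" and "\<bar>q\<bar> \<noteq> 1"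
  shows "rho_torus p q = real_of_int (\<bar>p\<bar> * \<bar>q\<bar>)"
proof -
  have "real_of_int p ^ 2 \<noteq> 1" "real_of_int q ^ 2 \<noteq> 1"
    using assms by (simp_all add: power2_eq_1_iff abs_if split: if_splits)
  then have "v2_torus p q \<noteq> 0"
    by (simp add: v2_torus_def)
  moreover have "6 * v3_torus p q = real_of_int p * real_of_int q * v2_torus p q"
    by (simp add: v3_torus_def v2_torus_def)
  ultimately show ?thesis
    by (simp add: rho_torus_def abs_mult)
qed

lemma crossing_torus_min_max:
  "crossing_torus p q = real_of_int (max \<bar>p\<bar> \<bar>q\<bar> * (min \<bar>p\<bar> \<bar>q\<bar> - 1))"
  by (simp add: crossing_torus_def)

lemma torus_invariant_identities:
  fixes m n :: real
  assumes "0 \<le> m" and "m \<le> n"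
  defines "w \<equiv> (m^2 - 1) * (n^2 - 1)" and "c \<equiv> n * (m - 1)" and "r \<equiv> m * n"
  shows "w * (c - r)^2 = c * ((c - r)^2 - 1) * (2 * r - c)"
    and "c = r - (sqrt ((r - 1)^2 - w) + sqrt ((r + 1)^2 - w)) / 2"
proof -
  show "w * (c - r)^2 = c * ((c - r)^2 - 1) * (2 * r - c)"
    unfolding w_def c_def r_def by algebra
  have "(r - 1)^2 - w = (n - m)^2" and "(r + 1)^2 - w = (n + m)^2"
    unfolding w_def r_def by algebra+
  then have "sqrt ((r - 1)^2 - w) = n - m" and "sqrt ((r + 1)^2 - w) = n + m"
    using assms(1,2) by simp_all
  then show "c = r - (sqrt ((r - 1)^2 - w) + sqrt ((r + 1)^2 - w)) / 2"
    unfolding c_def r_def by (simp add: algebra_simps)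
qed

theorem proposition3p6:
  fixes p q :: int
  assumes "coprime p q" and "\<bar>p\<bar> \<ge> 2" and "\<bar>q\<bar> \<ge> 2"
  shows "24 * v2_torus p q * (crossing_torus p q - rho_torus p q)^2
           = crossing_torus p q * ((crossing_torus p q - rho_torus p q)^2 - 1)
             * (2 * rho_torus p q - crossing_torus p q)
         \<and> crossing_torus p q = rho_torus p q
           - (sqrt ((rho_torus p q - 1)^2 - 24 * v2_torus p q)
              + sqrt ((rho_torus p q + 1)^2 - 24 * v2_torus p q)) / 2"
proof -
  define m where "m = real_of_int (min \<bar>p\<bar> \<bar>q\<bar>)"
  define n where "n = real_of_int (max \<bar>p\<bar> \<bar>q\<bar>)"
  have "0 \<le> m" "m \<le> n"
    by (simp_all add: m_def n_def)
  have "24 * v2_torus p q = (m^2 - 1) * (n^2 - 1)"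
    by (cases "\<bar>p\<bar> \<le> \<bar>q\<bar>") (simp_all add: v2_torus_abs m_def n_def min_def max_def)
  moreover have "rho_torus p q = m * n"
    using assms(2,3) by (simp add: rho_torus_eq_abs_mult m_def n_def min_def max_def)
  moreover have "crossing_torus p q = n * (m - 1)"
    by (simp add: crossing_torus_min_max m_def n_def)
  ultimately show ?thesis
    using torus_invariant_identities[OF \<open>0 \<le> m\<close> \<open>m \<le> n\<close>] by simp
qed

end
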